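(* Let $F$ be the elementary cellular automaton with rule number 13, or the one with rule number 29. For every nonempty finite word $u\in\{0,1\}^*$, the deterministic communication complexity of $\textsc{SInv}_{F,u}$ restricted to inputs of length $n$ is bounded by a constant independent of $n$.
   Context: An elementary cellular automaton (ECA) with rule number $N\in\{0,\dots,255\}$ is the map $F:\{0,1\}^{\mathbb Z}\to\{0,1\}^{\mathbb Z}$ given by $F(x)_i=f(x_{i-1},x_i,x_{i+1})$. Here the local rule $f:\{0,1\}^3\to\{0,1\}$ is determined by $N=\sum_{a,b,c\in\{0,1\}}2^{4a+2b+c}f(a,b,c)$. For a nonempty finite word $u$, $p_u\in\{0,1\}^{\mathbb Z}$ is defined by $(p_u)_i=u_{i\bmod |u|}$. For a finite word $x$, $p_u[x]$ is the configuration equal to $x$ on positions $0,\dots,|x|-1$ and to $p_u$ elsewhere. $\textsc{SInv}_{F,u}$ is the decision problem: on input a finite word $x$, decide whether there is an integer $w$ such that for all $t\ge0$ the set of positions where $F^t(p_u)$ and $F^t(p_u[x])$ differ is contained in an interval of length $w$. For each $n$, it is regarded as a function $\{0,1\}^n\to\{0,1\}$. For a function $g:X\times Y\to Z$, $D(g)$ is the minimal depth of a deterministic two-party protocol computing $g$. In such a protocol, Alice knows $x$ and Bob knows $y$. The protocol is a binary tree: each internal node is labelled by a function of Alice's input only or of Bob's input only, with values in $\{\text{left},\text{right}\}$, and each leaf is labelled by an output value. For $g:\{0,1\}^m\to Z$, set $D(g)=\max_{0\le i<m}D(g_i)$, where $g_i:\{0,1\}^i\times\{0,1\}^{m-i}\to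 Z$ is $g_i(x,y)=g(xy)$. *)

theory Defs
  imports Main
begin

text \<open>Configurations in {0,1}^Z are modelled as int => bool (True = 1).\<close>
type_synonym config = "int \<Rightarrow> bool"

definition eca_local :: "nat \<Rightarrow> bool \<Rightarrow> bool \<Rightarrow> bool \<Rightarrow> bool" where
  "eca_local N a b c = bit N (4 * of_bool a + 2 * of_bool b + of_bool c)"

definition eca :: "nat \<Rightarrow> config \<Rightarrow> config" where
  "eca N x = (\<lambda>i. eca_local N (x (i - 1)) (x i) (x (i + 1)))"

definition per :: "bool list \<Rightarrow> config" where
  "per u = (\<lambda>i. u ! nat (i mod int (length u)))"

definition per_patch :: "bool list \<Rightarrow> bool list \<Rightarrow> config" where
  "per_patch u x = (\<lambda>i. if 0 \<le> i \<and> i < int (length x) then x ! nat i else per u i)"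

definition SInv :: "nat \<Rightarrow> bool list \<Rightarrow> bool list \<Rightarrow> bool" where
  "SInv N u x = (\<exists>w::int. \<forall>t::nat. \<exists>a::int.
      {i. (eca N ^^ t) (per u) i \<noteq> (eca N ^^ t) (per_patch u x) i} \<subseteq> {a..<a + w})"

datatype ('a, 'b, 'z) protocol =
    Leaf 'z
  | AliceNode "'a \<Rightarrow> bool" "('a, 'b, 'z) protocol" "('a, 'b, 'z) protocol"
  | BobNode "'b \<Rightarrow> bool" "('a, 'b, 'z) protocol" "('a, 'b, 'z) protocol"

fun run :: "('a, 'b, 'z) protocol \<Rightarrow> 'a \<Rightarrow> 'b \<Rightarrow> 'z" where
  "run (Leaf z) x y = z"
| "run (AliceNode f l r) x y = (if f x then run l x y else run r x y)"
| "run (BobNode f l r) x y = (if f y then run l x y else run r x y)"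

fun depth :: "('a, 'b, 'z) protocol \<Rightarrow> nat" where
  "depth (Leaf z) = 0"
| "depth (AliceNode f l r) = Suc (max (depth l) (depth r))"
| "depth (BobNode f l r) = Suc (max (depth l) (depth r))"

definition Dcc :: "'a set \<Rightarrow> 'b set \<Rightarrow> ('a \<Rightarrow> 'b \<Rightarrow> 'z) \<Rightarrow> nat" where
  "Dcc X Y g = (LEAST d. \<exists>P. depth P = d \<and> (\<forall>x\<in>X. \<forall>y\<in>Y. run P x y = g x y))"

text \<open>For g : {0,1}^m -> Z, D(g) = max over i<m of D(g_i), g_i(x,y) = g(xy).
  (Max with 0 added so that m = 0 gives 0.)\<close>
definition Dword :: "nat \<Rightarrow> (bool list \<Rightarrow> 'z) \<Rightarrow> nat" where
  "Dword m g = Max (insert 0 {Dcc {x. length x = i} {y. length y = m - i} (\<lambda>x y. g (x @ y)) | i. i < m})"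

end

theory Submission
  imports Defs
begin

text \<open>
  For rule 29 the global map satisfies F^3 = F, so every iterate is one of F^0, F^1, F^2,
  and a finite patch can only spread by two cells in either direction: SInv_{29,u} is the
  constant True.  For rule 13 the pattern 01 is a wall: it is fixed forever, and since the
  rule has radius one, two walls shield the region outside them from what happens between
  them.  If u is not constant, p_u contains walls arbitrarily far to the left and right of
  any patch, so again SInv_{13,u} is constant True.  If u is constant c, the background
  stays uniform, a patch containing a non-c bit sends a defect to the right at speed one,
  while a wall left of that defect pins a second defect in place; hence SInv_{13,u}(x)
  holds iff all bits of x equal c.  In every case SInv(xy) is a Boolean function of one
  bit of Alice's half and one bit of Bob's half, so a depth-2 protocol computes it.
\<close>

section \<open>General facts about elementary cellular automata\<close>

lemma eca_cong:
  assumes "z (j - 1) = z' (j - 1)" "z j = z' j" "z (j + 1) = z' (j + 1)"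
  shows "eca N z j = eca N z' j"
  using assms by (simp add: eca_def)

lemma eca_light_cone:
  assumes "\<forall>j. j < a \<or> j > b \<longrightarrow> x j = y j"
    and "j < a - int k \<or> j > b + int k"
  shows "(eca N ^^ k) x j = (eca N ^^ k) y j"
  using assms(2)
proof (induction k arbitrary: j)
  case 0
  then show ?case using assms(1) by auto
next
  case (Suc k)
  then have "(eca N ^^ k) x i = (eca N ^^ k) y i" if "i \<in> {j - 1, j, j + 1}" for i
    using that by (intro Suc.IH) auto
  then show ?case unfolding funpow.simps(2) comp_apply by (intro eca_cong) auto
qed

definition defect :: "nat \<Rightarrow> bool list \<Rightarrow> bool list \<Rightarrow> nat \<Rightarrow> int set" where
  "defect N u x t = {i. (eca N ^^ t) (per u) i \<noteq> (eca N ^^ t) (per_patch u x) i}"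

lemma per_patch_outside:
  assumes "j < 0 \<or> j \<ge> int (length x)"
  shows "per_patch u x j = per u j"
  using assms by (auto simp: per_patch_def)

lemma SInv_if_confined:
  assumes "\<And>t. defect N u x t \<subseteq> {a..b}"
  shows "SInv N u x"
  unfolding SInv_def
proof (intro exI allI)
  fix t
  show "{i. (eca N ^^ t) (per u) i \<noteq> (eca N ^^ t) (per_patch u x) i} \<subseteq> {a..<a + (b - a + 1)}"
    using assms[of t] by (auto simp: defect_def)
qed

lemma not_SInv_if_spreading:
  assumes "\<And>t. \<exists>d\<in>defect N u x t. \<exists>e\<in>defect N u x t. int t \<le> e - d + K"
  shows "\<not> SInv N u x"
proof
  assume "SInv N u x"
  then obtain w where w: "\<And>t. \<exists>a. defect N u x t \<subseteq> {a..<a + w}"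
    unfolding SInv_def defect_def by blast
  define t where "t = nat (w + K)"
  obtain a where a: "defect N u x t \<subseteq> {a..<a + w}" using w by blast
  obtain d e where de: "d \<in> defect N u x t" "e \<in> defect N u x t" "int t \<le> e - d + K"
    using assms by blast
  then have "d \<in> {a..<a + w}" "e \<in> {a..<a + w}" using a by blast+
  moreover have "w + K \<le> int t" unfolding t_def by simp
  ultimately show False using de(3) by simp
qed

section \<open>Rule 29\<close>

lemma eca29: "eca 29 x i = (if x (i - 1) then \<not> x i \<and> \<not> x (i + 1) else x i \<or> \<not> x (i + 1))"
  by (cases "x (i - 1)"; cases "x i"; cases "x (i + 1)") (simp_all add: eca_def eca_local_def bit_0)

lemma eca29_cube: "eca 29 (eca 29 (eca 29 x)) = eca 29 x"
proof
  fix i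
  have shifts: "i - 1 - 1 = i - 2" "i - 1 + 1 = i" "i + 1 - 1 = i" "i + 1 + 1 = i + 2"
    "i - 2 - 1 = i - 3" "i - 2 + 1 = i - 1" "i + 2 - 1 = i + 1" "i + 2 + 1 = i + 3"
    for i :: int by auto
  show "eca 29 (eca 29 (eca 29 x)) i = eca 29 x i"
    by (simp only: eca29 shifts)
      (cases "x (i - 3)"; cases "x (i - 2)"; cases "x (i - 1)"; cases "x i";
        cases "x (i + 1)"; cases "x (i + 2)"; cases "x (i + 3)"; simp)
qed

lemma eca29_iterates: "\<exists>k\<le>2. eca 29 ^^ t = eca 29 ^^ k"
proof (induction t)
  case 0
  then show ?case by auto
next
  case (Suc t)
  then obtain k where k: "k \<le> 2" "eca 29 ^^ t = eca 29 ^^ k" by auto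
  show ?case
  proof (cases "k = 2")
    case True
    have "eca 29 ^^ Suc t = eca 29 ^^ 3"
      using k True by (simp add: numeral_2_eq_2 numeral_3_eq_3)
    also have "\<dots> = eca 29 ^^ 1"
      by (rule ext) (simp add: numeral_3_eq_3 eca29_cube)
    finally show ?thesis by (intro exI[of _ 1]) simp
  next
    case False
    then show ?thesis using k by (intro exI[of _ "Suc k"]) auto
  qed
qed

text \<open>Under rule 29 the defect never leaves the patch widened by two cells on each side.\<close>
theorem SInv29: "SInv 29 u x"
proof (rule SInv_if_confined)
  fix t
  obtain k where k: "k \<le> 2" "eca 29 ^^ t = eca 29 ^^ k" using eca29_iterates by blast
  have agree: "\<forall>j. j < 0 \<or> j > int (length x) - 1 \<longrightarrow> per u j = per_patch u x j"
    by (auto simp: per_patch_outside)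
  show "defect 29 u x t \<subseteq> {-2..int (length x) + 1}"
  proof
    fix i assume "i \<in> defect 29 u x t"
    then have "(eca 29 ^^ k) (per u) i \<noteq> (eca 29 ^^ k) (per_patch u x) i"
      using k by (simp add: defect_def)
    then have "\<not> (i < 0 - int k \<or> i > int (length x) - 1 + int k)"
      using eca_light_cone[OF agree] by blast
    then show "i \<in> {-2..int (length x) + 1}" using k by auto
  qed
qed

section \<open>Rule 13: walls\<close>

lemma eca13: "eca 13 x i = (\<not> x (i - 1) \<and> (x i \<or> \<not> x (i + 1)))"
  by (cases "x (i - 1)"; cases "x i"; cases "x (i + 1)") (simp_all add: eca_def eca_local_def bit_0)

definition wall :: "config \<Rightarrow> int \<Rightarrow> bool" where
  "wall x i \<longleftrightarrow> \<not> x i \<and> x (i + 1)"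

lemma wall_eca13: "wall x i \<Longrightarrow> wall (eca 13 x) i"
  by (simp add: wall_def eca13)

lemma wall_iterate: "wall x i \<Longrightarrow> wall ((eca 13 ^^ t) x) i"
  by (induction t) (simp_all add: wall_eca13)

lemma walls_shield:
  assumes walls: "wall x i1" "wall x i2"
    and agree: "\<forall>j. j \<le> i1 + 1 \<or> j \<ge> i2 \<longrightarrow> x j = y j"
    and j: "j \<le> i1 + 1 \<or> j \<ge> i2"
  shows "(eca 13 ^^ t) x j = (eca 13 ^^ t) y j"
  using j
proof (induction t arbitrary: j)
  case 0
  then show ?case using agree by auto
next
  case (Suc t)
  have "wall y i1" "wall y i2" using walls agree by (auto simp: wall_def)
  with walls have walls_t: "wall ((eca 13 ^^ Suc t) z) i"
    if "z \<in> {x, y}" "i \<in> {i1, i2}" for z i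
    using that wall_iterate by blast
  show ?case
  proof (cases "j = i1 + 1 \<or> j = i2")
    case True
    then show ?thesis using walls_t[of x] walls_t[of y] by (auto simp: wall_def)
  next
    case False
    then have "(eca 13 ^^ t) x i = (eca 13 ^^ t) y i" if "i \<in> {j - 1, j, j + 1}" for i
      using that Suc.prems by (intro Suc.IH) auto
    then show ?thesis unfolding funpow.simps(2) comp_apply by (intro eca_cong) auto
  qed
qed

lemma wall_between:
  assumes "\<not> q a" "q b" "a < b"
  shows "\<exists>i. a \<le> i \<and> i < b \<and> wall q i"
proof (rule ccontr)
  assume no_wall: "\<nexists>i. a \<le> i \<and> i < b \<and> wall q i"
  have "\<not> q (a + int k)" if "int k \<le> b - a" for k
    using that
  proof (induction k)
    case 0
    then show ?case using assms(1) by simp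
  next
    case (Suc k)
    then have "\<not> q (a + int k)" "a \<le> a + int k" "a + int k < b" by simp_all
    with no_wall have "\<not> q (a + int k + 1)" by (auto simp: wall_def)
    then show ?case by (simp add: ac_simps)
  qed
  from this[of "nat (b - a)"] assms(2,3) show False by simp
qed

lemma per_shift:
  assumes "k < length u"
  shows "per u (int k + int (length u) * m) = u ! k"
proof -
  have "(int k + int (length u) * m) mod int (length u) = int k"
    using assms by (simp add: mult.commute)
  then show ?thesis by (simp add: per_def)
qed

lemma per_wall:
  assumes "False \<in> set u" "True \<in> set u"
  shows "\<exists>i. int (length u) * m \<le> i \<and> i < int (length u) * (m + 2) \<and> wall (per u) i"
proof -
  let ?L = "length u"
  obtain j0 where j0: "j0 < ?L" "\<not> u ! j0" using assms(1) by (auto simp: in_set_conv_nth)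
  obtain j1 where j1: "j1 < ?L" "u ! j1" using assms(2) by (auto simp: in_set_conv_nth)
  have "\<not> per u (int j0 + int ?L * m)" using j0 by (simp add: per_shift)
  moreover have "per u (int j1 + int ?L * (m + 1))" using j1 by (simp add: per_shift)
  moreover have "int j0 + int ?L * m < int j1 + int ?L * (m + 1)"
    using j0 by (simp add: distrib_left)
  ultimately obtain i where "int j0 + int ?L * m \<le> i" "i < int j1 + int ?L * (m + 1)"
    "wall (per u) i"
    using wall_between by blast
  moreover have "int j1 + int ?L * (m + 1) \<le> int ?L * (m + 2)"
    using j1 by (simp add: distrib_left)
  ultimately show ?thesis by (intro exI[of _ i]) auto
qed

text \<open>For non-constant u, walls of p_u left of cell 0 and right of the patch confine
  the defect for all times.\<close>
theorem SInv13_nonconstant: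
  assumes "False \<in> set u" "True \<in> set u"
  shows "SInv 13 u x"
proof -
  have L: "length u \<ge> 1" using assms by (cases u) auto
  obtain i1 where i1: "i1 < int (length u) * (-3 + 2)" "wall (per u) i1"
    using per_wall[OF assms, of "-3"] by blast
  obtain i2 where i2: "int (length u) * int (length x) \<le> i2" "wall (per u) i2"
    using per_wall[OF assms, of "int (length x)"] by blast
  have "int (length x) \<le> int (length u) * int (length x)"
    using L by (metis mult_le_mono1 mult_1 of_nat_mono of_nat_mult)
  then have "int (length x) \<le> i2" using i2(1) by linarith
  moreover have "i1 + 1 < 0" using i1 L by simp
  ultimately have agree: "\<forall>j. j \<le> i1 + 1 \<or> j \<ge> i2 \<longrightarrow> per u j = per_patch u x j"
    by (auto simp: per_patch_outside)
  show ?thesis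
  proof (rule SInv_if_confined)
    fix t
    show "defect 13 u x t \<subseteq> {i1 + 2..i2 - 1}"
    proof
      fix i assume "i \<in> defect 13 u x t"
      then have "\<not> (i \<le> i1 + 1 \<or> i2 \<le> i)"
        using walls_shield[OF i1(2) i2(2) agree] by (auto simp: defect_def)
      then show "i \<in> {i1 + 2..i2 - 1}" by simp
    qed
  qed
qed

section \<open>Rule 13 on a constant background\<close>

lemma per_const:
  assumes "u \<noteq> []" "\<forall>b\<in>set u. b = c"
  shows "per u = (\<lambda>_. c)"
proof
  fix i
  have "nat (i mod int (length u)) < length u" using assms(1) by (simp add: nat_less_iff)
  then show "per u i = c" using assms(2) by (simp add: per_def)
qed

lemma eca13_const: "eca 13 (\<lambda>_. b) = (\<lambda>_. \<not> b)"
  by (rule ext) (simp add: eca13)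

lemma eca13_iterate_const: "\<exists>b. (eca 13 ^^ t) (\<lambda>_. c) = (\<lambda>_. b)"
  by (induction t) (auto simp: eca13_const)

lemma eca13_front_step:
  assumes "\<forall>j>p. y j = b" "y p \<noteq> b"
  shows "\<forall>j>p + 1. eca 13 y j = (\<not> b)" "eca 13 y (p + 1) \<noteq> (\<not> b)"
  using assms by (auto simp: eca13)

lemma eca13_front:
  assumes "\<forall>j>p. y j = c" "y p \<noteq> c"
  shows "(\<forall>j>p + int t. (eca 13 ^^ t) y j = (eca 13 ^^ t) (\<lambda>_. c) j)
    \<and> (eca 13 ^^ t) y (p + int t) \<noteq> (eca 13 ^^ t) (\<lambda>_. c) (p + int t)"
proof (induction t)
  case 0
  then show ?case using assms by simp
next
  case (Suc t)
  obtain b where b: "(eca 13 ^^ t) (\<lambda>_. c) = (\<lambda>_. b)" using eca13_iterate_const by blast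
  from Suc b have "\<forall>j>p + int t. (eca 13 ^^ t) y j = b" "(eca 13 ^^ t) y (p + int t) \<noteq> b"
    by auto
  from eca13_front_step[OF this]
  have "\<forall>j>p + int t + 1. (eca 13 ^^ Suc t) y j = (eca 13 ^^ Suc t) (\<lambda>_. c) j"
    "(eca 13 ^^ Suc t) y (p + int t + 1) \<noteq> (eca 13 ^^ Suc t) (\<lambda>_. c) (p + int t + 1)"
    by (simp_all add: b eca13_const)
  then show ?case by (simp add: ac_simps)
qed

lemma last_deviation:
  assumes "\<not> (\<forall>b\<in>set x. b = c)"
  obtains r where "r < length x" "x ! r \<noteq> c" "\<And>k. r < k \<Longrightarrow> k < length x \<Longrightarrow> x ! k = c"
proof -
  define S where "S = {k. k < length x \<and> x ! k \<noteq> c}"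
  have S: "finite S" "S \<noteq> {}" using assms by (auto simp: S_def in_set_conv_nth)
  show ?thesis
    using Max_in[OF S] Max_ge[OF S(1)] that unfolding S_def by fastforce
qed

text \<open>A patch with a non-c bit on the constant background c: the rightmost defect runs
  away to the right while a wall to its left keeps a defect near the patch.\<close>
theorem not_SInv13_constant:
  assumes u: "u \<noteq> []" "\<forall>b\<in>set u. b = c"
    and x: "\<not> (\<forall>b\<in>set x. b = c)"
  shows "\<not> SInv 13 u x"
proof -
  obtain r where r: "r < length x" "x ! r \<noteq> c"
    and right: "\<And>k. r < k \<Longrightarrow> k < length x \<Longrightarrow> x ! k = c"
    using last_deviation[OF x] by blast
  define q where "q = per_patch u x"
  have p: "per u = (\<lambda>_. c)" using per_const[OF u] .
  have qr: "q (int r) \<noteq> c" using r by (simp add: q_def per_patch_def)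
  have qright: "\<forall>j>int r. q j = c"
    using right by (auto simp: q_def per_patch_def p nat_less_iff)
  have "\<exists>i. i \<le> int r \<and> wall q i"
  proof (cases c)
    case True
    then show ?thesis using qr qright by (auto simp: wall_def)
  next
    case False
    have "\<not> q (-1)" "q (int r)" using False qr by (simp_all add: q_def per_patch_def p)
    then obtain i where "i < int r" "wall q i" using wall_between[of q "-1" "int r"] by auto
    then show ?thesis by (auto intro: less_imp_le)
  qed
  then obtain i where i: "i \<le> int r" "wall q i" by blast
  show ?thesis
  proof (rule not_SInv_if_spreading[where K = 1])
    fix t
    obtain b where b: "(eca 13 ^^ t) (\<lambda>_. c) = (\<lambda>_. b)" using eca13_iterate_const by blast
    have far: "int r + int t \<in> defect 13 u x t"
      using eca13_front[OF qright qr, of t] by (simp add: defect_def p q_def)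
    have "wall ((eca 13 ^^ t) q) i" using wall_iterate[OF i(2)] .
    then have near: "\<exists>d\<in>{i, i + 1}. d \<in> defect 13 u x t"
      using b by (cases b) (auto simp: defect_def p q_def wall_def)
    from far near show "\<exists>d\<in>defect 13 u x t. \<exists>e\<in>defect 13 u x t. int t \<le> e - d + 1"
      using i(1) by force
  qed
qed

theorem SInv13_constant:
  assumes "u \<noteq> []" "\<forall>b\<in>set u. b = c"
  shows "SInv 13 u x \<longleftrightarrow> (\<forall>b\<in>set x. b = c)"
proof
  assume x: "\<forall>b\<in>set x. b = c"
  have "per_patch u x i = per u i" for i
  proof (cases "0 \<le> i \<and> i < int (length x)")
    case True
    then have "x ! nat i \<in> set x" by (intro nth_mem) (simp add: nat_less_iff)
    then show ?thesis using True x by (simp add: per_patch_def per_const[OF assms])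
  qed (auto simp: per_patch_def)
  then have "per_patch u x = per u" by (rule ext)
  then show "SInv 13 u x" by (simp add: SInv_def)
qed (use not_SInv13_constant[OF assms] in blast)

section \<open>Communication complexity\<close>

lemma Dcc_le: "\<forall>x\<in>X. \<forall>y\<in>Y. run P x y = g x y \<Longrightarrow> Dcc X Y g \<le> depth P"
  unfolding Dcc_def by (rule Least_le) blast

lemma Dword_one_bit_each:
  fixes A B :: "bool list \<Rightarrow> bool" and h :: "bool \<Rightarrow> bool \<Rightarrow> 'z"
  assumes "\<And>xs ys. g (xs @ ys) = h (A xs) (B ys)"
  shows "Dword m g \<le> 2"
proof -
  define P :: "(bool list, bool list, 'z) protocol" where
    "P = AliceNode A (BobNode B (Leaf (h True True)) (Leaf (h True False)))
                     (BobNode B (Leaf (h False True)) (Leaf (h False False)))"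
  have "Dcc X Y (\<lambda>xs ys. g (xs @ ys)) \<le> 2" for X Y
  proof -
    have "\<forall>xs\<in>X. \<forall>ys\<in>Y. run P xs ys = g (xs @ ys)" by (simp add: P_def assms)
    then have "Dcc X Y (\<lambda>xs ys. g (xs @ ys)) \<le> depth P" by (rule Dcc_le)
    then show ?thesis by (simp add: P_def)
  qed
  then show ?thesis
    unfolding Dword_def by (intro Max.boundedI) auto
qed

theorem mainTheorem5:
  fixes N :: nat and u :: "bool list"
  assumes "N = 13 \<or> N = 29"
    and "u \<noteq> []"
  shows "\<exists>C. \<forall>n. Dword n (SInv N u) \<le> C"
proof (intro exI[of _ 2] allI)
  fix n
  show "Dword n (SInv N u) \<le> 2"
  proof (cases "N = 13 \<and> \<not> (False \<in> set u \<and> True \<in> set u)")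
    case True
    then obtain c where c: "\<forall>b\<in>set u. b = c" by (metis (full_types))
    have "SInv N u (xs @ ys) = ((\<forall>b\<in>set xs. b = c) \<and> (\<forall>b\<in>set ys. b = c))" for xs ys
      using True SInv13_constant[OF assms(2) c] by auto
    then show ?thesis by (rule Dword_one_bit_each)
  next
    case False
    then have "SInv N u z" for z using assms(1) SInv29 SInv13_nonconstant by auto
    then show ?thesis by (intro Dword_one_bit_each[where h = "\<lambda>_ _. True"]) auto
  qed
qed

end
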